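(* Suppose there is a $(v,[k_1,k_2,k_3],\lambda)$ Hadamard partitioned difference family. Then $k_1$ and $k_2$ are (in some order) the two numbers $$\frac{2\lambda-k_3\pm\sqrt{2\lambda(2k_3+1)-3k_3^2}}{2}.$$
   Context: $G$ is a finite group of order $v$ written additively, with difference $x-y:=x+(-y)$. For $B\subseteq G$, $\Delta B$ is the multiset $\{x-y: x,y\in B, x\neq y\}$; for $\mathcal{F}=\{B_1,\dots,B_t\}$, $\Delta\mathcal{F}$ is the multiset union of the $\Delta B_i$. A $(v,[k_1,\dots,k_t],\lambda)$ partitioned difference family (PDF) is a collection $\{B_1,\dots,B_t\}$ of subsets partitioning some group $G$ of order $v$ with $|B_i|=k_i$ such that $\Delta\mathcal{F}$ contains every non-zero element of $G$ exactly $\lambda$ times. It is Hadamard (HPDF) if $v=2\lambda$. *)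

theory Defs
  imports Complex_Main "HOL-Library.Multiset"
begin

text \<open>The group is a finite type of class group_add (written additively, not
necessarily abelian); difference is x - y = x + (- y).\<close>

definition diff_mset :: "'a::group_add set \<Rightarrow> 'a multiset" where
  "diff_mset B = image_mset (\<lambda>(x, y). x - y) (mset_set {(x, y). x \<in> B \<and> y \<in> B \<and> x \<noteq> y})"

definition family_diff :: "'a::group_add set list \<Rightarrow> 'a multiset" where
  "family_diff Fs = sum_list (map diff_mset Fs)"

definition is_PDF :: "'a::{group_add,finite} set list \<Rightarrow> nat \<Rightarrow> nat list \<Rightarrow> nat \<Rightarrow> bool" where
  "is_PDF Fs v ks lam \<longleftrightarrow>
     v = card (UNIV :: 'a set) \<and>
     length ks = length Fs \<and>
     (\<forall>i<length Fs. card (Fs ! i) = ks ! i) \<and>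
     (\<forall>i<length Fs. \<forall>j<length Fs. i \<noteq> j \<longrightarrow> Fs ! i \<inter> Fs ! j = {}) \<and>
     \<Union> (set Fs) = UNIV \<and>
     (\<forall>g. g \<noteq> 0 \<longrightarrow> count (family_diff Fs) g = lam)"

definition is_HPDF :: "'a::{group_add,finite} set list \<Rightarrow> nat \<Rightarrow> nat list \<Rightarrow> nat \<Rightarrow> bool" where
  "is_HPDF Fs v ks lam \<longleftrightarrow> is_PDF Fs v ks lam \<and> v = 2 * lam"

end

theory Submission
  imports Defs
begin

text \<open>Every block \<open>B\<close> contributes \<open>|B|(|B| - 1)\<close> differences, none of them zero, so
  \<open>\<Sum> k\<^sub>i(k\<^sub>i - 1) = \<lambda>(v - 1)\<close>; moreover \<open>\<Sum> k\<^sub>i = v\<close>. In the Hadamard case \<open>v = 2\<lambda>\<close>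
  these two relations give \<open>k\<^sub>1 + k\<^sub>2 = 2\<lambda> - k\<^sub>3\<close> and
  \<open>(k\<^sub>1 - k\<^sub>2)\<^sup>2 = 2\<lambda>(2k\<^sub>3 + 1) - 3k\<^sub>3\<^sup>2\<close>, so \<open>k\<^sub>1, k\<^sub>2\<close> are the two roots of the stated quadratic.\<close>

lemma size_diff_mset:
  fixes B :: "'a::group_add set"
  assumes "finite B"
  shows "size (diff_mset B) = card B * (card B - 1)"
proof -
  have offdiag: "{(x, y). x \<in> B \<and> y \<in> B \<and> x \<noteq> y} = B \<times> B - (\<lambda>x. (x, x)) ` B"
    by auto
  have "card ((\<lambda>x. (x, x)) ` B) = card B"
    by (rule card_image) (auto simp: inj_on_def)
  then have "card (B \<times> B - (\<lambda>x. (x, x)) ` B) = card B * card B - card B"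
    using assms by (subst card_Diff_subset) (auto simp: card_cartesian_product)
  then show ?thesis
    unfolding diff_mset_def offdiag by (simp add: diff_mult_distrib2)
qed

lemma zero_not_in_diff_mset: "(0::'a::group_add) \<notin># diff_mset B"
  unfolding diff_mset_def
  by (cases "finite {(x, y). x \<in> B \<and> y \<in> B \<and> x \<noteq> y}") auto

lemma zero_not_in_family_diff: "(0::'a::group_add) \<notin># family_diff Fs"
  unfolding family_diff_def by (induction Fs) (auto simp: zero_not_in_diff_mset)

lemma size_family_diff:
  fixes Fs :: "'a::{group_add,finite} set list"
  shows "size (family_diff Fs) = (\<Sum>B\<leftarrow>Fs. card B * (card B - 1))"
  unfolding family_diff_def by (induction Fs) (auto simp: size_diff_mset)

lemma is_PDF_map_card:
  assumes "is_PDF Fs v ks lam"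
  shows "map card Fs = ks"
  using assms by (auto simp: is_PDF_def intro: nth_equalityI)

lemma is_PDF_sum_list_sizes:
  assumes "is_PDF Fs v ks lam"
  shows "sum_list ks = v"
proof -
  have blocks: "\<Union> (set Fs) = (\<Union>i<length Fs. Fs ! i)"
    by (auto simp: set_conv_nth)
  have "v = card (\<Union>i<length Fs. Fs ! i)"
    using assms unfolding blocks[symmetric] by (simp add: is_PDF_def)
  also have "\<dots> = (\<Sum>i<length Fs. card (Fs ! i))"
    using assms by (intro card_UN_disjoint) (auto simp: is_PDF_def)
  also have "\<dots> = sum_list (map card Fs)"
    by (simp add: sum_list_sum_nth atLeast0LessThan)
  finally show ?thesis
    using is_PDF_map_card[OF assms] by simp
qed

lemma is_PDF_count_differences:
  assumes "is_PDF Fs v ks lam"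
  shows "(\<Sum>k\<leftarrow>ks. k * (k - 1)) = lam * (v - 1)"
proof -
  let ?D = "family_diff Fs"
  have v: "v = card (UNIV :: 'a set)" and count: "\<And>g. g \<noteq> 0 \<Longrightarrow> count ?D g = lam"
    using assms by (simp_all add: is_PDF_def)
  have "(\<Sum>k\<leftarrow>ks. k * (k - 1)) = size ?D"
    using is_PDF_map_card[OF assms] by (auto simp: size_family_diff comp_def)
  also have "\<dots> = (\<Sum>g\<in>set_mset ?D. count ?D g)"
    by (simp add: size_multiset_overloaded_eq)
  also have "\<dots> = (\<Sum>g\<in>UNIV - {0}. count ?D g)"
    by (rule sum.mono_neutral_left) (auto simp: zero_not_in_family_diff)
  also have "\<dots> = lam * (v - 1)"
    using count v by (simp add: card_Diff_singleton)
  finally show ?thesis .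
qed

lemma hadamard_discriminant:
  fixes k1 k2 k3 lam :: real
  assumes "k1 + k2 + k3 = 2 * lam"
    and "k1 * (k1 - 1) + k2 * (k2 - 1) + k3 * (k3 - 1) = lam * (2 * lam - 1)"
  shows "2 * lam * (2 * k3 + 1) - 3 * k3^2 = (k1 - k2)^2"
proof -
  have lam: "lam = (k1 + k2 + k3) / 2"
    using assms(1) by simp
  show ?thesis
    using assms(2) unfolding lam by (simp add: field_simps power2_eq_square)
qed

lemma pair_eq_half_sum_pm_half_dist:
  fixes a b :: real
  shows "{a, b} = {(a + b + \<bar>a - b\<bar>) / 2, (a + b - \<bar>a - b\<bar>) / 2}"
  by (auto simp: abs_if)

theorem proposition3p2:
  fixes Fs :: "'a::{group_add,finite} set list"
    and v k1 k2 k3 lam :: nat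
  assumes "is_HPDF Fs v [k1, k2, k3] lam"
  shows "{real k1, real k2} =
    {(2 * real lam - real k3 + sqrt (2 * real lam * (2 * real k3 + 1) - 3 * (real k3)^2)) / 2,
     (2 * real lam - real k3 - sqrt (2 * real lam * (2 * real k3 + 1) - 3 * (real k3)^2)) / 2}"
proof -
  have pdf: "is_PDF Fs v [k1, k2, k3] lam" and v: "v = 2 * lam"
    using assms unfolding is_HPDF_def by blast+
  have "v \<noteq> 0"
    using pdf by (simp add: is_PDF_def)
  have real_pronic: "real (k * (k - 1)) = real k * (real k - 1)" for k :: nat
    by (cases k) (auto simp: algebra_simps)
  have sizes_sum: "real k1 + real k2 + real k3 = 2 * real lam"
    using is_PDF_sum_list_sizes[OF pdf] v by simp
  have "real k1 * (real k1 - 1) + real k2 * (real k2 - 1) + real k3 * (real k3 - 1)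
      = real lam * (2 * real lam - 1)"
    using arg_cong[OF is_PDF_count_differences[OF pdf], of real] v \<open>v \<noteq> 0\<close>
    by (simp only: list.map sum_list.Cons sum_list.Nil of_nat_add real_pronic)
      (simp add: of_nat_diff)
  from hadamard_discriminant[OF sizes_sum this]
  have "sqrt (2 * real lam * (2 * real k3 + 1) - 3 * (real k3)^2) = \<bar>real k1 - real k2\<bar>"
    by simp
  moreover have "2 * real lam - real k3 = real k1 + real k2"
    using sizes_sum by simp
  ultimately show ?thesis
    using pair_eq_half_sum_pm_half_dist by presburger
qed

end
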